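(* Let $a_1,\dots,a_n>0$, $B>0$, and $\tilde{x}\in\mathbb{R}^n$ with $\sum_j a_j\tilde{x}_j\neq0$. Then $\pi_{\mathrm{PoS}}(\tilde{x})$ is an optimal solution of $$\min_{v\in\Delta_n}\ \frac{B}{2}\big\|v-P^F(\tilde{x})\big\|_1. \qquad (\ast)$$ Moreover, if $\sum_{j=1}^na_j\tilde{x}_j>0$, then $\pi_{\mathrm{BL}}(\tilde{x})$ is also an optimal solution of $(\ast)$.
   Context: $\Delta_n=\{v\in\mathbb{R}^n:v\ge0,\ \sum_iv_i=1\}$. For $y$ with $\sum_ja_jy_j\ne0$, $P^F(y)_i=\frac{a_iy_i}{\sum_{j=1}^na_jy_j}$. The projection-onto-simplex mechanism is $\pi_{\mathrm{PoS}}(\tilde{x})=\arg\min_{v\in\Delta_n}\|v-P^F(\tilde{x})\|_2$. The baseline mechanism is $\pi_{\mathrm{BL}}(\tilde{x})_i=\frac{a_i(\tilde{x}_i)_+}{\sum_{j=1}^na_j(\tilde{x}_j)_+}$, where $(y)_+=\max\{y,0\}$ (well-defined when some $\tilde{x}_j>0$, in particular when $\sum_ja_j\tilde{x}_j>0$). *)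

theory Defs
  imports "HOL-Analysis.Analysis"
begin

definition prob_simplex :: "(real ^ 'n) set" where
  "prob_simplex = {v. (\<forall>i. 0 \<le> v $ i) \<and> (\<Sum>i\<in>UNIV. v $ i) = 1}"

definition PF :: "real ^ 'n \<Rightarrow> real ^ 'n \<Rightarrow> real ^ 'n" where
  "PF a y = (\<chi> i. a $ i * y $ i / (\<Sum>j\<in>UNIV. a $ j * y $ j))"

definition pi_PoS :: "real ^ 'n \<Rightarrow> real ^ 'n \<Rightarrow> real ^ 'n" where
  "pi_PoS a x = closest_point prob_simplex (PF a x)"

definition pi_BL :: "real ^ 'n \<Rightarrow> real ^ 'n \<Rightarrow> real ^ 'n" where
  "pi_BL a x = (\<chi> i. a $ i * max (x $ i) 0 / (\<Sum>j\<in>UNIV. a $ j * max (x $ j) 0))"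

definition l1norm :: "real ^ 'n \<Rightarrow> real" where
  "l1norm v = (\<Sum>i\<in>UNIV. \<bar>v $ i\<bar>)"

definition optimal_l1 :: "real \<Rightarrow> real ^ 'n \<Rightarrow> real ^ 'n \<Rightarrow> bool" where
  "optimal_l1 B p v \<longleftrightarrow> v \<in> prob_simplex \<and>
     (\<forall>w\<in>prob_simplex. B / 2 * l1norm (v - p) \<le> B / 2 * l1norm (w - p))"

end

theory Submission
  imports Defs
begin

text \<open>Both mechanisms are optimal because of a single criterion. For vectors with equal
  coordinate sums, \<open>\<parallel>v - p\<parallel>\<^sub>1 = 2 \<Sum>\<^sub>i (v\<^sub>i - p\<^sub>i)\<^sub>+\<close>, and on the simplex every summand is at
  least \<open>(-p\<^sub>i)\<^sub>+\<close>; so any point of the simplex with \<open>v\<^sub>i \<le> (p\<^sub>i)\<^sub>+\<close> for all \<open>i\<close> attains this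
  lower bound and is an \<open>\<ell>\<^sub>1\<close>-minimiser. The Euclidean projection satisfies the criterion
  since otherwise moving the mass of an overfull coordinate to an underfull one would bring it
  closer to \<open>p\<close>; the baseline satisfies it because its normaliser \<open>\<Sum>\<^sub>j a\<^sub>j (x\<^sub>j)\<^sub>+\<close> dominates
  \<open>\<Sum>\<^sub>j a\<^sub>j x\<^sub>j > 0\<close>.\<close>

lemma closed_prob_simplex: "closed (prob_simplex :: (real ^ 'n) set)"
proof -
  have "(prob_simplex :: (real ^ 'n) set) =
      {v. \<forall>i. 0 \<le> v $ i} \<inter> {v. (\<Sum>i\<in>UNIV. v $ i) = 1}"
    by (auto simp: prob_simplex_def)
  moreover have "closed {v :: real ^ 'n. \<forall>i. 0 \<le> v $ i}"
    by (intro closed_Collect_all closed_Collect_le continuous_intros)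
  moreover have "closed {v :: real ^ 'n. (\<Sum>i\<in>UNIV. v $ i) = 1}"
    by (intro closed_Collect_eq continuous_intros)
  ultimately show ?thesis
    by (metis closed_Int)
qed

lemma convex_prob_simplex: "convex (prob_simplex :: (real ^ 'n) set)"
  unfolding convex_def prob_simplex_def
  by (auto simp: sum.distrib sum_distrib_left[symmetric])

lemma axis_in_prob_simplex: "axis k 1 \<in> prob_simplex"
  by (simp add: prob_simplex_def axis_def)

lemma prob_simplex_nonempty: "prob_simplex \<noteq> {}"
  using axis_in_prob_simplex by blast

lemma closest_point_in_prob_simplex: "closest_point prob_simplex p \<in> prob_simplex"
  by (rule closest_point_in_set[OF closed_prob_simplex prob_simplex_nonempty])

lemma l1norm_diff_eq_twice_positive_part:
  fixes v p :: "real ^ 'n"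
  assumes "(\<Sum>i\<in>UNIV. v $ i) = (\<Sum>i\<in>UNIV. p $ i)"
  shows "l1norm (v - p) = 2 * (\<Sum>i\<in>UNIV. max (v $ i - p $ i) 0)"
proof -
  have "\<bar>v $ i - p $ i\<bar> = 2 * max (v $ i - p $ i) 0 - (v $ i - p $ i)" for i
    by (simp add: max_def abs_if)
  then have "l1norm (v - p) =
      2 * (\<Sum>i\<in>UNIV. max (v $ i - p $ i) 0) - (\<Sum>i\<in>UNIV. v $ i - p $ i)"
    by (simp add: l1norm_def sum_subtractf sum_distrib_left)
  with assms show ?thesis
    by (simp add: sum_subtractf)
qed

lemma optimal_l1_if_below_positive_part:
  fixes p w :: "real ^ 'n"
  assumes "0 \<le> B" and p_sum: "(\<Sum>i\<in>UNIV. p $ i) = 1" and w: "w \<in> prob_simplex"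
    and below: "\<And>i. w $ i \<le> max (p $ i) 0"
  shows "optimal_l1 B p w"
proof -
  let ?M = "2 * (\<Sum>i\<in>UNIV. max (- p $ i) 0)"
  have "l1norm (v - p) = 2 * (\<Sum>i\<in>UNIV. max (v $ i - p $ i) 0)" if "v \<in> prob_simplex" for v
    using that p_sum by (intro l1norm_diff_eq_twice_positive_part) (simp add: prob_simplex_def)
  moreover have "?M \<le> 2 * (\<Sum>i\<in>UNIV. max (v $ i - p $ i) 0)" if "v \<in> prob_simplex" for v
    using that by (auto simp: prob_simplex_def intro!: sum_mono max.mono)
  moreover have "max (w $ i - p $ i) 0 = max (- p $ i) 0" for i
  proof -
    have "0 \<le> w $ i"
      using w by (simp add: prob_simplex_def)
    with below[of i] show ?thesis
      by (auto simp: max_def)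
  qed
  ultimately have "l1norm (w - p) \<le> l1norm (v - p)" if "v \<in> prob_simplex" for v
    using that w by simp
  with assms show ?thesis
    unfolding optimal_l1_def by (auto intro: mult_left_mono)
qed

lemma closest_point_prob_simplex_below_positive_part:
  fixes p :: "real ^ 'n"
  assumes p_sum: "(\<Sum>i\<in>UNIV. p $ i) = 1"
  shows "closest_point prob_simplex p $ k \<le> max (p $ k) 0"
proof (rule ccontr)
  define w where "w = closest_point prob_simplex p"
  assume "\<not> ?thesis"
  then have k: "p $ k < w $ k" "0 < w $ k"
    by (auto simp: w_def)
  have w: "w \<in> prob_simplex"
    unfolding w_def by (rule closest_point_in_prob_simplex)
  have "\<exists>j. w $ j < p $ j"
  proof (rule ccontr)
    assume "\<nexists>j. w $ j < p $ j"
    then have "(\<Sum>i\<in>UNIV. p $ i) < (\<Sum>i\<in>UNIV. w $ i)"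
      using k by (intro sum_strict_mono_ex1) (auto simp: not_less)
    with w p_sum show False
      by (simp add: prob_simplex_def)
  qed
  then obtain j where j: "w $ j < p $ j" ..
  with k have "j \<noteq> k" by auto
  define d where "d = w $ k *\<^sub>R (axis j (1::real) - axis k 1)"
  have "(\<Sum>i\<in>UNIV. d $ i) = 0"
    by (simp add: d_def axis_def sum_distrib_left[symmetric] sum_subtractf)
  moreover have "0 \<le> (w + d) $ i" for i
    using w \<open>j \<noteq> k\<close> by (auto simp: prob_simplex_def d_def axis_def)
  ultimately have "w + d \<in> prob_simplex"
    using w by (simp add: prob_simplex_def sum.distrib)
  then have "inner (p - w) d \<le> 0"
    using closest_point_dot[OF convex_prob_simplex closed_prob_simplex]
    by (metis add_diff_cancel_left' w_def)
  moreover have "inner (p - w) d = w $ k * ((p $ j - w $ j) - (p $ k - w $ k))"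
    by (simp add: d_def inner_diff_right inner_axis algebra_simps)
  moreover have "0 < w $ k * ((p $ j - w $ j) - (p $ k - w $ k))"
    using j k by (intro mult_pos_pos) auto
  ultimately show False
    by linarith
qed

lemma sum_PF:
  assumes "(\<Sum>j\<in>UNIV. a $ j * x $ j) \<noteq> 0"
  shows "(\<Sum>i\<in>UNIV. PF a x $ i) = 1"
  using assms by (simp add: PF_def sum_divide_distrib[symmetric])

lemma weighted_sum_le_weighted_positive_part_sum:
  fixes a x :: "real ^ 'n"
  assumes "\<And>i. 0 < a $ i"
  shows "(\<Sum>j\<in>UNIV. a $ j * x $ j) \<le> (\<Sum>j\<in>UNIV. a $ j * max (x $ j) 0)"
  using assms by (intro sum_mono mult_left_mono) (auto simp: less_imp_le)

lemma pi_BL_in_prob_simplex: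
  assumes "\<And>i. 0 < a $ i" and "0 < (\<Sum>j\<in>UNIV. a $ j * max (x $ j) 0)"
  shows "pi_BL a x \<in> prob_simplex"
  using assms unfolding prob_simplex_def pi_BL_def
  by (simp add: sum_divide_distrib[symmetric] less_imp_le)

lemma pi_BL_below_positive_part_PF:
  assumes a: "\<And>i. 0 < a $ i" and S: "0 < (\<Sum>j\<in>UNIV. a $ j * x $ j)"
  shows "pi_BL a x $ i \<le> max (PF a x $ i) 0"
proof -
  define S where "S = (\<Sum>j\<in>UNIV. a $ j * x $ j)"
  define T where "T = (\<Sum>j\<in>UNIV. a $ j * max (x $ j) 0)"
  have "0 < S" "S \<le> T"
    using S weighted_sum_le_weighted_positive_part_sum[OF a, of x] by (simp_all add: S_def T_def)
  have "pi_BL a x $ i = a $ i * max (x $ i) 0 / T"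
    by (simp add: pi_BL_def T_def)
  also have "\<dots> \<le> a $ i * max (x $ i) 0 / S"
    using a[of i] \<open>0 < S\<close> \<open>S \<le> T\<close> by (intro divide_left_mono) auto
  also have "\<dots> = max (PF a x $ i) 0"
    using a[of i] \<open>0 < S\<close>
    by (auto simp: PF_def S_def[symmetric] max_def divide_le_0_iff mult_le_0_iff zero_le_mult_iff)
  finally show ?thesis .
qed

theorem theorem3:
  fixes a x :: "real ^ 'n" and B :: real
  assumes "\<forall>i. 0 < a $ i" and "0 < B"
    and "(\<Sum>j\<in>UNIV. a $ j * x $ j) \<noteq> 0"
  shows "optimal_l1 B (PF a x) (pi_PoS a x)
     \<and> ((\<Sum>j\<in>UNIV. a $ j * x $ j) > 0 \<longrightarrow> optimal_l1 B (PF a x) (pi_BL a x))"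
proof (intro conjI impI)
  have a: "\<And>i. 0 < a $ i" and B: "0 \<le> B"
    using assms(1,2) by auto
  note PF_sum = sum_PF[OF assms(3)]
  show "optimal_l1 B (PF a x) (pi_PoS a x)"
    unfolding pi_PoS_def
    using B PF_sum closest_point_in_prob_simplex closest_point_prob_simplex_below_positive_part[OF PF_sum]
    by (rule optimal_l1_if_below_positive_part)
  assume S: "(\<Sum>j\<in>UNIV. a $ j * x $ j) > 0"
  then have "0 < (\<Sum>j\<in>UNIV. a $ j * max (x $ j) 0)"
    using weighted_sum_le_weighted_positive_part_sum[OF a, of x] by linarith
  with a have "pi_BL a x \<in> prob_simplex"
    by (rule pi_BL_in_prob_simplex)
  then show "optimal_l1 B (PF a x) (pi_BL a x)"
    using B PF_sum pi_BL_below_positive_part_PF[OF a S]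
    by (intro optimal_l1_if_below_positive_part)
qed

end
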